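(* Define numbers $m_{n,k}$ ($n,k\ge0$) by $m_{0,k}=\delta_{0k}$ and $m_{n,k}=(m_{n-1,0}+m_{n-1,1}+\cdots+m_{n-1,k})^{-1}$ for $n\ge1$. Then for each fixed $k\ge0$, $$m_{0,k}\le m_{2,k}\le m_{4,k}\le\cdots,\qquad m_{1,k}\ge m_{3,k}\ge m_{5,k}\ge\cdots,$$ and $\lim_{n\to\infty}m_{2n,k}=\lim_{n\to\infty}m_{2n+1,k}=m_k$. Furthermore $\lim_{k\to\infty}m_{n,k}=0$ for every $n\ge2$; consequently the probability measure $\mu_n=\widehat T^{\circ n}(\delta_0)$, whose moment sequence is $(m_{n,k})_k$, has no mass at $t=1$ for $n\ge2$.
   Context: Let $(m_n)_{n\ge0}$ be the unique sequence of positive reals with $m_0=1$ and $(1+m_1+\cdots+m_n)\,m_n=1$ for $n\ge1$. For a normalized Hausdorff moment sequence $\mathbf a=(a_n)_n$ (i.e. $a_n=\int_0^1 t^n\,d\nu(t)$ for a probability measure $\nu$ on $[0,1]$), $T(\mathbf a)_n=1/(a_0+\cdots+a_n)$ defines again a normalized Hausdorff moment sequence; $\widehat T$ denotes the corresponding map on probability measures on $[0,1]$ (so $\widehat T(\nu)$ has moments $T(\mathbf a)$). $\delta_q$ denotes the unit point mass at $q$. *)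

theory Defs
  imports "HOL-Probability.Probability"
begin

primrec mnk :: "nat \<Rightarrow> nat \<Rightarrow> real" where
  "mnk 0 k = (if k = 0 then 1 else 0)"
| "mnk (Suc n) k = 1 / (\<Sum>j\<le>k. mnk n j)"

end

theory Submission
  imports Defs
begin

text \<open>
  Passing from a sequence to the reciprocals of its partial sums reverses the pointwise
  order, and the second row dominates the zeroth one; hence the even rows increase and
  the odd rows decrease, and all entries lie in [0,1], so both limits exist.  By induction
  on k the partial sums up to k - 1 of both limits equal S = m_0 + ... + m_{k-1}, and the
  limits L and U of the k-th entries satisfy U = 1/(S + L) and L = 1/(S + U).  The map
  t \<mapsto> 1/(S + t) has no 2-cycles on [0,\<infinity>), so L = U is its fixed point m_k.

  For n \<ge> 1 all entries of row n are at most 1, so the entries of row n + 1 dominate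
  1/(j + 1) and its partial sums grow like the harmonic numbers; thus row n + 2 tends to 0.
  Since \<mu>{1} is bounded by every moment of \<mu>, such a measure has no atom at 1.
\<close>

lemma mnk_0_right [simp]: "mnk n 0 = 1"
  by (induction n) auto

lemma mnk_nonneg: "0 \<le> mnk n k"
  by (induction n arbitrary: k) (auto simp: sum_nonneg)

lemma sum_mnk_ge_1: "1 \<le> (\<Sum>j\<le>k. mnk n j)"
proof -
  have "mnk n 0 \<le> (\<Sum>j\<le>k. mnk n j)"
    by (rule member_le_sum) (auto simp: mnk_nonneg)
  then show ?thesis by simp
qed

lemma mnk_le_1: "mnk n k \<le> 1"
proof (cases n)
  case (Suc p)
  then show ?thesis
    using sum_mnk_ge_1[of p k] by simp
qed simp

lemmas mnk_Suc = mnk.simps(2)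
declare mnk_Suc [simp del]

lemma mnk_Suc_antimono:
  assumes "\<And>j. mnk p j \<le> mnk q j"
  shows "mnk (Suc q) k \<le> mnk (Suc p) k"
proof -
  have "(\<Sum>j\<le>k. mnk p j) \<le> (\<Sum>j\<le>k. mnk q j)"
    by (intro sum_mono assms)
  then show ?thesis
    using sum_mnk_ge_1[of p k] by (simp add: mnk_Suc frac_le)
qed

lemma mnk_even_le_Suc_Suc: "mnk (2*n) k \<le> mnk (Suc (Suc (2*n))) k"
proof (induction n arbitrary: k)
  case 0
  show ?case by (simp add: mnk_nonneg)
next
  case (Suc n)
  have "mnk (Suc (Suc (Suc (2*n)))) j \<le> mnk (Suc (2*n)) j" for j
    by (rule mnk_Suc_antimono) (rule Suc.IH)
  then show ?case
    by (simp add: mnk_Suc_antimono)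
qed

lemma incseq_mnk_even: "incseq (\<lambda>n. mnk (2*n) k)"
  by (rule incseq_SucI) (simp add: mnk_even_le_Suc_Suc)

lemma decseq_mnk_odd: "decseq (\<lambda>n. mnk (2*n + 1) k)"
  by (rule decseq_SucI) (simp add: mnk_Suc_antimono mnk_even_le_Suc_Suc)

lemma harm_le_sum_mnk: "harm (Suc k) \<le> (\<Sum>j\<le>k. mnk (Suc n) j)"
proof -
  have "harm (Suc k) = (\<Sum>j\<le>k. 1 / real (Suc j))"
    by (simp add: harm_altdef lessThan_Suc_atMost inverse_eq_divide)
  also have "\<dots> \<le> (\<Sum>j\<le>k. mnk (Suc n) j)"
  proof (rule sum_mono)
    fix j
    have "(\<Sum>i\<le>j. mnk n i) \<le> real (Suc j)"
      using sum_mono[of "{..j}" "mnk n" "\<lambda>_. 1"] mnk_le_1 by simp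
    then show "1 / real (Suc j) \<le> mnk (Suc n) j"
      using sum_mnk_ge_1[of n j] by (simp add: mnk_Suc frac_le)
  qed
  finally show ?thesis .
qed

lemma mnk_tendsto_0:
  assumes "n \<ge> 2"
  shows "(\<lambda>k. mnk n k) \<longlonglongrightarrow> 0"
proof -
  obtain p where p: "n = Suc (Suc p)"
    using assms by (metis add_2_eq_Suc le_Suc_ex)
  have "filterlim (\<lambda>k. harm (Suc k) :: real) at_top sequentially"
    using harm_at_top filterlim_sequentially_Suc by blast
  then have "filterlim (\<lambda>k. \<Sum>j\<le>k. mnk (Suc p) j) at_top sequentially"
    by (rule filterlim_at_top_mono) (simp add: harm_le_sum_mnk)
  then have "(\<lambda>k. inverse (\<Sum>j\<le>k. mnk (Suc p) j)) \<longlonglongrightarrow> 0"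
    by (rule tendsto_inverse_0_at_top)
  then show ?thesis
    unfolding p by (simp add: mnk_Suc[abs_def] inverse_eq_divide)
qed

lemma tendsto_mnk_Suc:
  assumes lim: "\<And>j. j \<le> k \<Longrightarrow> (\<lambda>n. mnk (f n) j) \<longlonglongrightarrow> l j"
  shows "(\<lambda>n. mnk (Suc (f n)) k) \<longlonglongrightarrow> 1 / (\<Sum>j\<le>k. l j)"
proof -
  have sums: "(\<lambda>n. \<Sum>j\<le>k. mnk (f n) j) \<longlonglongrightarrow> (\<Sum>j\<le>k. l j)"
    by (intro tendsto_sum) (simp add: lim)
  have "1 \<le> (\<Sum>j\<le>k. l j)"
    by (rule LIMSEQ_le_const[OF sums]) (simp add: sum_mnk_ge_1)
  then have "(\<lambda>n. 1 / (\<Sum>j\<le>k. mnk (f n) j)) \<longlonglongrightarrow> 1 / (\<Sum>j\<le>k. l j)"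
    by (intro tendsto_divide tendsto_const sums) auto
  then show ?thesis by (simp add: mnk_Suc)
qed

lemma two_cycle_of_reciprocal_shift:
  fixes S L U x :: real
  assumes "S > 0" "0 \<le> L" "0 \<le> U" "0 \<le> x"
    and U: "U = 1 / (S + L)" and L: "L = 1 / (S + U)" and x: "x = 1 / (S + x)"
  shows "L = x \<and> U = x"
proof -
  have pos: "S + L > 0" "S + U > 0" "S + x > 0"
    using assms(1-4) by simp_all
  have UL: "U * (S + L) = 1"
    using U pos(1) by simp
  have LU: "L * (S + U) = 1"
    using L pos(2) by simp
  have xx: "x * (S + x) = 1"
    using pos(3) by (subst (1) x) simp
  have "(U - L) * S = U * (S + L) - L * (S + U)"
    by (simp add: algebra_simps)
  then have "U = L"
    using UL LU \<open>S > 0\<close> by simp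
  with LU xx have "(x - L) * (S + x + L) = 0"
    by (simp add: algebra_simps)
  moreover have "S + x + L > 0"
    using assms(1-4) by simp
  ultimately show ?thesis
    using \<open>U = L\<close> by simp
qed

lemma mnk_even_odd_tendsto:
  fixes m :: "nat \<Rightarrow> real"
  assumes m0: "m 0 = 1"
    and mpos: "\<And>n. m n > 0"
    and mrec: "\<And>n. n \<ge> 1 \<Longrightarrow> (\<Sum>i\<le>n. m i) * m n = 1"
  shows "(\<lambda>n. mnk (2*n) k) \<longlonglongrightarrow> m k \<and> (\<lambda>n. mnk (2*n + 1) k) \<longlonglongrightarrow> m k"
proof (induction k rule: less_induct)
  case (less k)
  show ?case
  proof (cases "k = 0")
    case True
    then show ?thesis using m0 by simp
  next
    case False
    have "\<forall>n. mnk (2*n) k \<le> 1" "\<forall>n. 0 \<le> mnk (2*n + 1) k"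
      by (simp_all add: mnk_le_1 mnk_nonneg)
    then obtain L U where L: "(\<lambda>n. mnk (2*n) k) \<longlonglongrightarrow> L"
      and U: "(\<lambda>n. mnk (2*n + 1) k) \<longlonglongrightarrow> U"
      by (metis incseq_convergent[OF incseq_mnk_even] decseq_convergent[OF decseq_mnk_odd])
    define S where "S = (\<Sum>j<k. m j)"
    have split: "(\<Sum>j\<le>k. l j) = S + l k" if "\<And>j. j < k \<Longrightarrow> l j = m j" for l
      using that by (simp add: S_def flip: lessThan_Suc_atMost)
    have "(\<lambda>n. mnk (Suc (2*n)) k) \<longlonglongrightarrow> 1 / (\<Sum>j\<le>k. (m(k := L)) j)"
      by (rule tendsto_mnk_Suc) (use L less in \<open>auto simp: le_less\<close>)
    then have U_eq: "U = 1 / (S + L)"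
      using LIMSEQ_unique[OF U] split[of "m(k := L)"] by simp
    have "(\<lambda>n. mnk (Suc (Suc (2*n))) k) \<longlonglongrightarrow> 1 / (\<Sum>j\<le>k. (m(k := U)) j)"
      by (rule tendsto_mnk_Suc) (use U less in \<open>auto simp: le_less\<close>)
    then have L_eq: "L = 1 / (S + U)"
      using LIMSEQ_unique[OF L[THEN LIMSEQ_Suc]] split[of "m(k := U)"] by simp
    have "S > 0"
      unfolding S_def using mpos False by (intro sum_pos) auto
    moreover have "m k = 1 / (S + m k)"
      using mrec[of k] split[of m] False mpos[of k] \<open>S > 0\<close> by (simp add: field_simps)
    moreover have "0 \<le> L"
      by (rule LIMSEQ_le_const[OF L]) (simp add: mnk_nonneg)
    moreover have "0 \<le> U"
      by (rule LIMSEQ_le_const[OF U]) (simp add: mnk_nonneg)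
    ultimately have "L = m k \<and> U = m k"
      using two_cycle_of_reciprocal_shift less_imp_le[OF mpos] U_eq L_eq by blast
    then show ?thesis using L U by simp
  qed
qed

lemma measure_singleton_1_le_moment:
  fixes \<mu> :: "real measure"
  assumes "finite_measure \<mu>" "sets \<mu> = sets borel" "AE t in \<mu>. t \<in> {0..1}"
    and "integrable \<mu> (\<lambda>t. t ^ k)"
  shows "measure \<mu> {1} \<le> (\<integral>t. t ^ k \<partial>\<mu>)"
proof -
  interpret finite_measure \<mu> by (rule assms(1))
  have ev: "{1} \<in> sets \<mu>" using assms(2) by simp
  have "measure \<mu> {1} = (\<integral>t. indicator {1} t \<partial>\<mu>)"
    using ev by simp
  also have "\<dots> \<le> (\<integral>t. t ^ k \<partial>\<mu>)"
  proof (rule integral_mono_AE)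
    show "integrable \<mu> (indicator {1} :: real \<Rightarrow> real)"
      using ev by (simp add: integrable_indicator_iff less_top[symmetric])
    show "AE t in \<mu>. indicator {1} t \<le> t ^ k"
      using assms(3) by eventually_elim (auto simp: indicator_def)
  qed (rule assms(4))
  finally show ?thesis .
qed

lemma measure_singleton_1_eq_0_if_moments_tendsto_0:
  fixes \<mu> :: "real measure"
  assumes "prob_space \<mu>" "sets \<mu> = sets borel" "measure \<mu> {0..1} = 1"
    and "\<And>k. integrable \<mu> (\<lambda>t. t ^ k)"
    and "(\<lambda>k. \<integral>t. t ^ k \<partial>\<mu>) \<longlonglongrightarrow> 0"
  shows "measure \<mu> {1} = 0"
proof -
  interpret prob_space \<mu> by (rule assms(1))
  have "AE t in \<mu>. t \<in> {0..1}"
    using AE_prob_1[OF assms(3)] .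
  then have "measure \<mu> {1} \<le> (\<integral>t. t ^ k \<partial>\<mu>)" for k
    using measure_singleton_1_le_moment finite_measure_axioms assms(2,4) by blast
  then have "measure \<mu> {1} \<le> 0"
    using LIMSEQ_le_const[OF assms(5)] by blast
  then show ?thesis
    using measure_nonneg[of \<mu> "{1}"] by linarith
qed

theorem lemma2p1:
  fixes m :: "nat \<Rightarrow> real"
  assumes m0: "m 0 = 1"
    and mpos: "\<And>n. m n > 0"
    and mrec: "\<And>n. n \<ge> 1 \<Longrightarrow> (\<Sum>i\<le>n. m i) * m n = 1"
  shows "(\<forall>k. incseq (\<lambda>n. mnk (2*n) k) \<and> decseq (\<lambda>n. mnk (2*n+1) k)
              \<and> (\<lambda>n. mnk (2*n) k) \<longlonglongrightarrow> m k
              \<and> (\<lambda>n. mnk (2*n+1) k) \<longlonglongrightarrow> m k)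
         \<and> (\<forall>n\<ge>2. (\<lambda>k. mnk n k) \<longlonglongrightarrow> 0)
         \<and> (\<forall>n\<ge>2. \<forall>\<mu> :: real measure.
           prob_space \<mu> \<and> sets \<mu> = sets borel \<and> measure \<mu> {0..1} = 1
           \<and> (\<forall>k. integrable \<mu> (\<lambda>t. t ^ k) \<and> (\<integral>t. t ^ k \<partial>\<mu>) = mnk n k)
           \<longrightarrow> measure \<mu> {1} = 0)"
proof (intro conjI allI impI)
  fix k
  show "incseq (\<lambda>n. mnk (2*n) k)" "decseq (\<lambda>n. mnk (2*n+1) k)"
    by (rule incseq_mnk_even, rule decseq_mnk_odd)
  show "(\<lambda>n. mnk (2*n) k) \<longlonglongrightarrow> m k" "(\<lambda>n. mnk (2*n+1) k) \<longlonglongrightarrow> m k"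
    using mnk_even_odd_tendsto[OF assms] by auto
next
  fix n :: nat
  assume "2 \<le> n"
  then show "(\<lambda>k. mnk n k) \<longlonglongrightarrow> 0"
    by (rule mnk_tendsto_0)
next
  fix n :: nat and \<mu> :: "real measure"
  assume "2 \<le> n" and "prob_space \<mu> \<and> sets \<mu> = sets borel \<and> measure \<mu> {0..1} = 1
    \<and> (\<forall>k. integrable \<mu> (\<lambda>t. t ^ k) \<and> (\<integral>t. t ^ k \<partial>\<mu>) = mnk n k)"
  then show "measure \<mu> {1} = 0"
    using mnk_tendsto_0 measure_singleton_1_eq_0_if_moments_tendsto_0[of \<mu>] by simp
qed

end
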